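(* Assume $V_n^2$ is positive definite and let $$C_{V,f}^2=nh^d\sup_{t\in[-1,1]^d}K(t)^2\,\Psi(t)^\top V_n^{-2}\Psi(t).$$ Let $\boldsymbol\zeta=\nabla L(\theta^* )-\mathbf E\nabla L(\theta^* )$ and $M(\lambda,\gamma)=\log\mathbf E\exp(\lambda\gamma^\top V_n^{-1}\boldsymbol\zeta)$. Then for every $\mathfrak g>0$, every unit vector $\gamma\in\mathbb R^p$ and every $\lambda$ with $|\lambda|\le\mathfrak g$, $$M(\lambda,\gamma)\le\frac{\nu_0^2\lambda^2}{2},\qquad \nu_0^2=p+\frac{16\,\mathfrak g\,C_{V,f}^3}{\sqrt{nh^{3d}}}.$$
   Context: Fix integers $d,p\ge1$, $n\ge1$, $h>0$, $x_0\in\mathbb R^d$. Let $X_1,\dots,X_n$ be i.i.d. in $\mathbb R^d$ with Lebesgue density $f$. Let $K:\mathbb R^d\to[0,\infty)$ be a bounded measurable kernel vanishing outside $[-1,1]^d$, and $\psi_0\equiv1,\psi_1,\dots,\psi_{p-1}$ bounded measurable functions on $[-1,1]^d$; $\Psi(t)=(\psi_0(t),\dots,\psi_{p-1}(t))^\top$. With $T_i=(X_i-x_0)/h$, the local log-likelihood is $L(\theta)=\sum_{i=1}^nK(T_i)\Psi(T_i)^\top\theta-nh^d\int K(t)e^{\Psi(t)^\top\theta}dt$; $\theta^*$ is any fixed parameter (e.g. $\arg\max\mathbf EL$). Note $\nabla L(\theta)-\mathbf E\nabla L(\theta)=\sum_{i=1}^n\big(K(T_i)\Psi(T_i)-\mathbf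 EK(T_i)\Psi(T_i)\big)$ does not depend on $\theta$. $V_n^2=\mathrm{Var}(\nabla L(\theta^* ))$ and $V_n^{-1}$ is the inverse of its symmetric positive definite square root. *)

theory Defs
  imports "HOL-Probability.Probability"
begin

definition unit_cube :: "(real ^ 'd) set" where
  "unit_cube = cbox (- One) One"

definition symmetric_mat :: "real ^ 'n ^ 'n \<Rightarrow> bool" where
  "symmetric_mat A \<longleftrightarrow> transpose A = A"

definition pos_def_mat :: "real ^ 'n ^ 'n \<Rightarrow> bool" where
  "pos_def_mat A \<longleftrightarrow> symmetric_mat A \<and> (\<forall>x. x \<noteq> 0 \<longrightarrow> x \<bullet> (A *v x) > 0)"

definition cov_mat :: "'a measure \<Rightarrow> ('a \<Rightarrow> real ^ 'p) \<Rightarrow> real ^ 'p ^ 'p" where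
  "cov_mat M Z = (\<chi> i j. integral\<^sup>L M (\<lambda>\<omega>.
      (Z \<omega> $ i - integral\<^sup>L M (\<lambda>\<omega>'. Z \<omega>' $ i)) * (Z \<omega> $ j - integral\<^sup>L M (\<lambda>\<omega>'. Z \<omega>' $ j))))"

text \<open>Centered score: zeta = grad L(theta) - E grad L(theta) (independent of theta).\<close>
definition score_centered ::
  "'a measure \<Rightarrow> nat \<Rightarrow> real \<Rightarrow> real ^ 'd \<Rightarrow> (real ^ 'd \<Rightarrow> real) \<Rightarrow> (real ^ 'd \<Rightarrow> real ^ 'p)
    \<Rightarrow> (nat \<Rightarrow> 'a \<Rightarrow> real ^ 'd) \<Rightarrow> 'a \<Rightarrow> real ^ 'p" where
  "score_centered M n h x0 K \<Psi> X \<omega> =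
     (\<Sum>i<n. K ((1/h) *\<^sub>R (X i \<omega> - x0)) *\<^sub>R \<Psi> ((1/h) *\<^sub>R (X i \<omega> - x0))
        - integral\<^sup>L M (\<lambda>\<omega>'. K ((1/h) *\<^sub>R (X i \<omega>' - x0)) *\<^sub>R \<Psi> ((1/h) *\<^sub>R (X i \<omega>' - x0))))"

end

theory Submission
  imports Defs
begin

text \<open>Write \<open>S\<close> for the square root of \<open>V_n^2\<close>, \<open>w = S^-1 \<gamma>\<close> and \<open>Y_i = K(T_i) \<Psi>(T_i)\<close>.
  Then \<open>\<gamma>' S^-1 \<zeta>\<close> is the sum of the independent centred variables \<open>Z_i = w' (Y_i - E Y_i)\<close>,
  whose variances add up to \<open>w' S^2 w = |\<gamma>|^2 = 1\<close>, and Cauchy-Schwarz bounds \<open>|w' Y_i|\<close> by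
  \<open>b = C_{V,f} / sqrt (n h^d)\<close>. A centred variable bounded by \<open>c\<close> satisfies
  \<open>log E exp (\<lambda> Z) \<le> \<lambda>^2 E Z^2 / 2 + |\<lambda>|^3 c^3\<close>: for \<open>|\<lambda>| c \<le> 1\<close> this is the cubic Taylor bound
  of \<open>exp\<close>, otherwise it follows from \<open>|\<lambda>| c \<le> (|\<lambda>| c)^3\<close>. Summing over the \<open>n\<close> summands with
  \<open>c = 2 b\<close> and using \<open>|\<lambda>| \<le> g\<close> gives \<open>\<lambda>^2/2 + 8 n g \<lambda>^2 b^3\<close>, the claim, as
  \<open>n b^3 = C_{V,f}^3 / sqrt (n h^{3d})\<close> and \<open>p \<ge> 1\<close>.\<close>

lemma exp_le_cubic_Taylor:
  fixes x :: real
  assumes "\<bar>x\<bar> \<le> 1"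
  shows "exp x \<le> 1 + x + x\<^sup>2 / 2 + \<bar>x\<bar> ^ 3 / 2"
proof -
  obtain t where t: "\<bar>t\<bar> \<le> \<bar>x\<bar>" "exp x = (\<Sum>m<3. x ^ m / fact m) + exp t / fact 3 * x ^ 3"
    using Maclaurin_exp_le[of x 3] by blast
  have taylor: "(\<Sum>m<3. x ^ m / fact m) = 1 + x + x\<^sup>2 / 2"
    by (simp add: eval_nat_numeral)
  have "exp t \<le> 3"
    using t(1) assms exp_le by (smt (verit) exp_le_cancel_iff)
  have "exp t / 6 * x ^ 3 \<le> exp t / 6 * \<bar>x\<bar> ^ 3"
    by (intro mult_left_mono) (auto simp: power_abs[symmetric])
  also have "\<dots> \<le> 3 / 6 * \<bar>x\<bar> ^ 3"
    using \<open>exp t \<le> 3\<close> by (intro mult_right_mono) auto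
  finally show ?thesis
    using t(2) taylor by (simp add: eval_nat_numeral)
qed

lemma matrix_inv_invertible:
  fixes A :: "'a::semiring_1 ^ 'n ^ 'n"
  assumes "invertible A"
  shows "A ** matrix_inv A = mat 1" "matrix_inv A ** A = mat 1"
  using someI_ex[OF assms[unfolded invertible_def]] by (auto simp: matrix_inv_def)

lemma pos_def_mat_invertible:
  fixes S :: "real ^ 'n ^ 'n"
  assumes "pos_def_mat S"
  shows "invertible S"
proof -
  have "x = 0" if "S *v x = 0" for x
    using assms that unfolding pos_def_mat_def by force
  then show ?thesis
    using matrix_left_invertible_ker invertible_left_inverse by blast
qed

lemma transpose_matrix_inv_symmetric:
  fixes S :: "real ^ 'n ^ 'n"
  assumes "invertible S" "transpose S = S"
  shows "transpose (matrix_inv S) = matrix_inv S"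
proof -
  have "transpose (matrix_inv S) ** S = mat 1"
    using arg_cong[OF matrix_inv_invertible(1)[OF assms(1)], of transpose] assms(2)
    by (simp add: matrix_transpose_mul)
  then have "transpose (matrix_inv S) = transpose (matrix_inv S) ** (S ** matrix_inv S)"
    by (simp add: matrix_inv_invertible[OF assms(1)] matrix_mul_rid)
  also have "\<dots> = matrix_inv S"
    by (simp add: matrix_mul_assoc \<open>transpose (matrix_inv S) ** S = mat 1\<close> matrix_mul_lid)
  finally show ?thesis .
qed

lemma inner_matrix_vector_symmetric:
  fixes A :: "real ^ 'n ^ 'n"
  assumes "transpose A = A"
  shows "x \<bullet> (A *v y) = (A *v x) \<bullet> y"
  by (metis assms dot_lmul_matrix transpose_matrix_vector)

lemma inner_square_matrix_symmetric:
  fixes A :: "real ^ 'n ^ 'n"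
  assumes "transpose A = A"
  shows "x \<bullet> ((A ** A) *v x) = (norm (A *v x))\<^sup>2"
  by (metis assms inner_matrix_vector_symmetric matrix_vector_mul_assoc power2_norm_eq_inner)

lemma inner_matrix_inv_square:
  fixes S :: "real ^ 'n ^ 'n"
  assumes "invertible S" "transpose S = S"
  shows "(matrix_inv S *v x) \<bullet> ((S ** S) *v (matrix_inv S *v x)) = x \<bullet> x"
proof -
  have "S *v (matrix_inv S *v x) = x"
    by (simp add: matrix_vector_mul_assoc matrix_inv_invertible[OF assms(1)])
  then show ?thesis
    by (simp add: inner_square_matrix_symmetric[OF assms(2)] power2_norm_eq_inner)
qed

lemma bdd_above_kernel_quadratic_form:
  fixes A :: "real ^ 'p ^ 'p" and K :: "'d \<Rightarrow> real" and \<Psi> :: "'d \<Rightarrow> real ^ 'p"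
  assumes "transpose A = A" "\<And>t. \<bar>K t\<bar> \<le> BK" "\<And>t. t \<in> C \<Longrightarrow> norm (\<Psi> t) \<le> BP"
  shows "bdd_above ((\<lambda>t. (K t)\<^sup>2 * (\<Psi> t \<bullet> ((A ** A) *v \<Psi> t))) ` C)"
proof -
  obtain KA where KA: "0 < KA" "\<And>x. norm (A *v x) \<le> norm x * KA"
    using bounded_linear.pos_bounded[OF matrix_vector_mul_bounded_linear[of A]] by blast
  have "(K t)\<^sup>2 * (\<Psi> t \<bullet> ((A ** A) *v \<Psi> t)) \<le> (BK * (BP * KA))\<^sup>2" if "t \<in> C" for t
  proof -
    have "norm (A *v \<Psi> t) \<le> BP * KA"
      using KA(2)[of "\<Psi> t"] assms(3)[OF that] KA(1)
      by (meson mult_right_mono less_imp_le order_trans)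
    then have "\<bar>K t\<bar> * norm (A *v \<Psi> t) \<le> BK * (BP * KA)"
      using assms(2)[of t] by (intro mult_mono) auto
    then have "(\<bar>K t\<bar> * norm (A *v \<Psi> t))\<^sup>2 \<le> (BK * (BP * KA))\<^sup>2"
      by (intro power_mono) auto
    then show ?thesis
      by (simp add: inner_square_matrix_symmetric[OF assms(1)] power_mult_distrib)
  qed
  then show ?thesis
    by (intro bdd_aboveI2)
qed

lemma abs_inner_kernel_le_sqrt_SUP:
  fixes A :: "real ^ 'p ^ 'p" and K :: "'d \<Rightarrow> real" and \<Psi> :: "'d \<Rightarrow> real ^ 'p"
  assumes "transpose A = A" "norm \<gamma> = 1" "t \<in> C" "0 \<le> K t"
    and "bdd_above ((\<lambda>t. (K t)\<^sup>2 * (\<Psi> t \<bullet> ((A ** A) *v \<Psi> t))) ` C)"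
  shows "\<bar>(A *v \<gamma>) \<bullet> (K t *\<^sub>R \<Psi> t)\<bar> \<le> sqrt (SUP t\<in>C. (K t)\<^sup>2 * (\<Psi> t \<bullet> ((A ** A) *v \<Psi> t)))"
proof -
  have "\<bar>(A *v \<gamma>) \<bullet> (K t *\<^sub>R \<Psi> t)\<bar> = K t * \<bar>\<gamma> \<bullet> (A *v \<Psi> t)\<bar>"
    using assms(4) by (simp add: inner_matrix_vector_symmetric[OF assms(1)] abs_mult)
  also have "\<dots> \<le> K t * norm (A *v \<Psi> t)"
    using Cauchy_Schwarz_ineq2[of \<gamma> "A *v \<Psi> t"] assms(2,4) by (intro mult_left_mono) auto
  also have "\<dots> = sqrt ((K t)\<^sup>2 * (\<Psi> t \<bullet> ((A ** A) *v \<Psi> t)))"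
    using assms(4) by (simp add: inner_square_matrix_symmetric[OF assms(1)] real_sqrt_mult)
  also have "\<dots> \<le> sqrt (SUP t\<in>C. (K t)\<^sup>2 * (\<Psi> t \<bullet> ((A ** A) *v \<Psi> t)))"
    using assms(3,5) by (intro real_sqrt_le_mono cSUP_upper)
  finally show ?thesis .
qed

lemma kernel_feature_measurable:
  fixes K :: "real ^ 'd \<Rightarrow> real" and \<Psi> :: "real ^ 'd \<Rightarrow> real ^ 'p"
  assumes "K \<in> borel_measurable borel" "\<Psi> \<in> borel_measurable (restrict_space borel unit_cube)"
    and "\<And>t. t \<notin> unit_cube \<Longrightarrow> K t = 0"
  shows "(\<lambda>t. K t *\<^sub>R \<Psi> t) \<in> borel_measurable borel"
proof -
  have "(\<lambda>t. K t *\<^sub>R \<Psi> t) = (\<lambda>t. if t \<in> unit_cube then K t *\<^sub>R \<Psi> t else 0)"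
    using assms(3) by auto
  moreover have "(\<lambda>t. K t *\<^sub>R \<Psi> t) \<in> borel_measurable (restrict_space borel unit_cube)"
    using borel_measurable_scaleR[OF measurable_restrict_space1[OF assms(1)] assms(2)] .
  moreover have "unit_cube \<in> sets (borel :: (real ^ 'd) measure)"
    unfolding unit_cube_def by (simp add: borel_closed)
  ultimately show ?thesis
    by (simp add: measurable_If_restrict_space_iff)
qed

lemma kernel_feature_bounded:
  fixes K :: "'d \<Rightarrow> real" and \<Psi> :: "'d \<Rightarrow> 'b::real_normed_vector"
  assumes "\<And>t. 0 \<le> K t" "\<exists>B. \<forall>t. K t \<le> B" "\<And>t. t \<notin> C \<Longrightarrow> K t = 0"
    and "\<exists>B. \<forall>t\<in>C. norm (\<Psi> t) \<le> B"
  shows "\<exists>B. \<forall>t. norm (K t *\<^sub>R \<Psi> t) \<le> B"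
proof -
  obtain BK BP where BK: "\<And>t. K t \<le> BK" and BP: "\<And>t. t \<in> C \<Longrightarrow> norm (\<Psi> t) \<le> BP"
    using assms(2,4) by blast
  have "norm (K t *\<^sub>R \<Psi> t) \<le> BK * \<bar>BP\<bar>" for t
    using assms(1,3)[of t] BK[of t] BP[of t]
    by (cases "t \<in> C") (auto intro!: mult_mono)
  then show ?thesis
    by blast
qed

lemma abs_inner_kernel_feature_le:
  fixes A :: "real ^ 'p ^ 'p" and K :: "'d \<Rightarrow> real" and \<Psi> :: "'d \<Rightarrow> real ^ 'p"
  assumes "\<And>t. 0 \<le> K t" "\<exists>B. \<forall>t. K t \<le> B" "\<And>t. t \<notin> C \<Longrightarrow> K t = 0"
    and "\<exists>B. \<forall>t\<in>C. norm (\<Psi> t) \<le> B" and "C \<noteq> {}"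
    and "transpose A = A" "norm \<gamma> = 1"
  shows "\<bar>(A *v \<gamma>) \<bullet> (K t *\<^sub>R \<Psi> t)\<bar> \<le> sqrt (SUP t\<in>C. (K t)\<^sup>2 * (\<Psi> t \<bullet> ((A ** A) *v \<Psi> t)))"
proof -
  obtain BK BP where "\<And>t. K t \<le> BK" "\<And>t. t \<in> C \<Longrightarrow> norm (\<Psi> t) \<le> BP"
    using assms(2,4) by blast
  then have "bdd_above ((\<lambda>t. (K t)\<^sup>2 * (\<Psi> t \<bullet> ((A ** A) *v \<Psi> t))) ` C)"
    using assms(1,6) by (intro bdd_above_kernel_quadratic_form[where BK = BK and BP = BP]) auto
  then have le_SUP: "\<bar>(A *v \<gamma>) \<bullet> (K t *\<^sub>R \<Psi> t)\<bar> \<le> sqrt (SUP t\<in>C. (K t)\<^sup>2 * (\<Psi> t \<bullet> ((A ** A) *v \<Psi> t)))"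
    if "t \<in> C" for t
    using assms(6,7) that assms(1) by (intro abs_inner_kernel_le_sqrt_SUP)
  show ?thesis
  proof (cases "t \<in> C")
    case False
    obtain c where "c \<in> C"
      using assms(5) by blast
    then show ?thesis
      using assms(3)[OF False] order_trans[OF abs_ge_zero le_SUP] by simp
  qed (rule le_SUP)
qed

context prob_space
begin

lemma integrable_bounded:
  fixes f :: "'a \<Rightarrow> 'b::{banach, second_countable_topology}"
  assumes "f \<in> borel_measurable M" "\<And>\<omega>. norm (f \<omega>) \<le> B"
  shows "integrable M f"
  using assms by (intro integrable_const_bound[where B = B]) auto

lemma abs_expectation_le:
  fixes f :: "'a \<Rightarrow> real"
  assumes "f \<in> borel_measurable M" "\<And>\<omega>. \<bar>f \<omega>\<bar> \<le> B"
  shows "\<bar>expectation f\<bar> \<le> B"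
proof -
  have "\<bar>expectation f\<bar> \<le> expectation (\<lambda>\<omega>. \<bar>f \<omega>\<bar>)"
    by (rule integral_abs_bound)
  also have "\<dots> \<le> expectation (\<lambda>_. B)"
  proof (rule integral_mono)
    show "integrable M (\<lambda>\<omega>. \<bar>f \<omega>\<bar>)"
      using assms by (intro integrable_bounded[where B = B]) auto
  qed (use assms(2) in auto)
  finally show ?thesis
    by (simp add: prob_space)
qed

lemma expectation_exp_pos:
  fixes f :: "'a \<Rightarrow> real"
  assumes "f \<in> borel_measurable M" "\<And>\<omega>. \<bar>f \<omega>\<bar> \<le> B"
  shows "0 < expectation (\<lambda>\<omega>. exp (f \<omega>))"
proof -
  have "expectation (\<lambda>_. exp (- B)) \<le> expectation (\<lambda>\<omega>. exp (f \<omega>))"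
  proof (rule integral_mono)
    show "integrable M (\<lambda>\<omega>. exp (f \<omega>))"
      using assms by (intro integrable_bounded[where B = "exp B"]) (auto simp: abs_le_iff)
    show "exp (- B) \<le> exp (f \<omega>)" for \<omega>
      using assms(2)[of \<omega>] by simp
  qed simp
  then show ?thesis
    using exp_gt_zero[of "- B"] by (simp add: prob_space del: exp_gt_zero)
qed

lemma ln_expectation_exp_le:
  fixes Z :: "'a \<Rightarrow> real" and lam c :: real
  assumes Z: "Z \<in> borel_measurable M" and bnd: "\<And>\<omega>. \<bar>Z \<omega>\<bar> \<le> c"
    and mean: "expectation Z = 0"
  shows "ln (expectation (\<lambda>\<omega>. exp (lam * Z \<omega>)))
    \<le> lam\<^sup>2 * expectation (\<lambda>\<omega>. (Z \<omega>)\<^sup>2) / 2 + \<bar>lam\<bar> ^ 3 * c ^ 3"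
    (is "ln ?E \<le> ?b")
proof -
  have lamZ: "\<bar>lam * Z \<omega>\<bar> \<le> \<bar>lam\<bar> * c" for \<omega>
    using bnd[of \<omega>] by (simp add: abs_mult mult_left_mono)
  have int_exp: "integrable M (\<lambda>\<omega>. exp (lam * Z \<omega>))"
    using Z lamZ by (intro integrable_bounded[where B = "exp (\<bar>lam\<bar> * c)"]) (auto simp: abs_le_iff)
  have int_Z: "integrable M Z"
    using Z bnd by (intro integrable_bounded[where B = c]) auto
  have int_Z2: "integrable M (\<lambda>\<omega>. (Z \<omega>)\<^sup>2)"
    using Z bnd by (intro integrable_bounded[where B = "c\<^sup>2"])
      (auto intro: power2_le_iff_abs_le[THEN iffD2] order_trans[OF abs_ge_zero])
  have "0 \<le> expectation (\<lambda>\<omega>. (Z \<omega>)\<^sup>2)"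
    by simp
  have "0 \<le> c"
    using bnd[of undefined] by linarith
  have "?E \<le> exp ?b"
  proof (cases "\<bar>lam\<bar> * c \<le> 1")
    case True
    have "exp (lam * Z \<omega>) \<le> 1 + lam * Z \<omega> + lam\<^sup>2 / 2 * (Z \<omega>)\<^sup>2 + \<bar>lam\<bar> ^ 3 * c ^ 3 / 2" for \<omega>
    proof -
      have "\<bar>lam * Z \<omega>\<bar> ^ 3 \<le> (\<bar>lam\<bar> * c) ^ 3"
        by (intro power_mono lamZ) simp
      then show ?thesis
        using exp_le_cubic_Taylor[of "lam * Z \<omega>"] lamZ[of \<omega>] True
        by (simp add: power_mult_distrib)
    qed
    then have "?E \<le> expectation (\<lambda>\<omega>. 1 + lam * Z \<omega> + lam\<^sup>2 / 2 * (Z \<omega>)\<^sup>2 + \<bar>lam\<bar> ^ 3 * c ^ 3 / 2)"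
      using int_exp int_Z int_Z2 by (intro integral_mono) auto
    also have "\<dots> = 1 + lam\<^sup>2 * expectation (\<lambda>\<omega>. (Z \<omega>)\<^sup>2) / 2 + \<bar>lam\<bar> ^ 3 * c ^ 3 / 2"
      using int_Z int_Z2 mean by (simp add: prob_space)
    also have "\<dots> \<le> 1 + ?b"
      using \<open>0 \<le> c\<close> by simp
    also have "\<dots> \<le> exp ?b"
      by (rule exp_ge_add_one_self)
    finally show ?thesis .
  next
    case False
    have "?E \<le> expectation (\<lambda>_. exp (\<bar>lam\<bar> * c))"
      using int_exp lamZ by (intro integral_mono) (auto simp: abs_le_iff)
    also have "\<dots> = exp (\<bar>lam\<bar> * c)"
      by (simp add: prob_space)
    also have "\<dots> \<le> exp ((\<bar>lam\<bar> * c) ^ 3)"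
      using False by (simp add: self_le_power)
    also have "\<dots> \<le> exp ?b"
      using \<open>0 \<le> expectation (\<lambda>\<omega>. (Z \<omega>)\<^sup>2)\<close> by (simp add: power_mult_distrib)
    finally show ?thesis .
  qed
  moreover have "0 < ?E"
    using Z lamZ by (intro expectation_exp_pos) auto
  ultimately show ?thesis
    by (metis ln_exp ln_le_cancel_iff exp_gt_zero)
qed

lemma ln_expectation_exp_sum_indep_le:
  fixes Z :: "'i \<Rightarrow> 'a \<Rightarrow> real" and lam c :: real
  assumes I: "finite I" and indep: "indep_vars (\<lambda>_. borel) Z I"
    and bnd: "\<And>i \<omega>. i \<in> I \<Longrightarrow> \<bar>Z i \<omega>\<bar> \<le> c"
    and mean: "\<And>i. i \<in> I \<Longrightarrow> expectation (Z i) = 0"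
  shows "ln (expectation (\<lambda>\<omega>. exp (lam * (\<Sum>i\<in>I. Z i \<omega>))))
    \<le> lam\<^sup>2 / 2 * (\<Sum>i\<in>I. expectation (\<lambda>\<omega>. (Z i \<omega>)\<^sup>2)) + card I * \<bar>lam\<bar> ^ 3 * c ^ 3"
proof -
  have Z: "Z i \<in> borel_measurable M" if "i \<in> I" for i
    using indep that unfolding indep_vars_def by auto
  have lamZ: "\<bar>lam * Z i \<omega>\<bar> \<le> \<bar>lam\<bar> * c" if "i \<in> I" for i \<omega>
    using bnd[OF that, of \<omega>] by (simp add: abs_mult mult_left_mono)
  have "expectation (\<lambda>\<omega>. exp (lam * (\<Sum>i\<in>I. Z i \<omega>)))
      = expectation (\<lambda>\<omega>. \<Prod>i\<in>I. exp (lam * Z i \<omega>))"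
    using I by (simp add: sum_distrib_left exp_sum)
  also have "\<dots> = (\<Prod>i\<in>I. expectation (\<lambda>\<omega>. exp (lam * Z i \<omega>)))"
  proof (rule indep_vars_lebesgue_integral[OF I])
    show "indep_vars (\<lambda>_. borel) (\<lambda>i \<omega>. exp (lam * Z i \<omega>)) I"
      by (rule indep_vars_compose2[OF indep]) simp
    show "integrable M (\<lambda>\<omega>. exp (lam * Z i \<omega>))" if "i \<in> I" for i
      using Z[OF that] lamZ[OF that]
      by (intro integrable_bounded[where B = "exp (\<bar>lam\<bar> * c)"]) (auto simp: abs_le_iff)
  qed
  finally have "ln (expectation (\<lambda>\<omega>. exp (lam * (\<Sum>i\<in>I. Z i \<omega>))))
      = ln (\<Prod>i\<in>I. expectation (\<lambda>\<omega>. exp (lam * Z i \<omega>)))"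
    by simp
  also have "\<dots> = (\<Sum>i\<in>I. ln (expectation (\<lambda>\<omega>. exp (lam * Z i \<omega>))))"
  proof (rule ln_prod[OF I])
    show "expectation (\<lambda>\<omega>. exp (lam * Z i \<omega>)) \<noteq> 0" if "i \<in> I" for i
    proof -
      have "0 < expectation (\<lambda>\<omega>. exp (lam * Z i \<omega>))"
        using Z[OF that] lamZ[OF that] by (intro expectation_exp_pos) auto
      then show ?thesis
        by simp
    qed
  qed
  also have "\<dots> \<le> (\<Sum>i\<in>I. lam\<^sup>2 * expectation (\<lambda>\<omega>. (Z i \<omega>)\<^sup>2) / 2 + \<bar>lam\<bar> ^ 3 * c ^ 3)"
    using Z bnd mean by (intro sum_mono ln_expectation_exp_le) auto
  also have "\<dots> = lam\<^sup>2 / 2 * (\<Sum>i\<in>I. expectation (\<lambda>\<omega>. (Z i \<omega>)\<^sup>2)) + card I * \<bar>lam\<bar> ^ 3 * c ^ 3"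
    by (simp add: sum.distrib sum_distrib_left sum_divide_distrib)
  finally show ?thesis .
qed

lemma expectation_square_sum_indep:
  fixes Z :: "'i \<Rightarrow> 'a \<Rightarrow> real"
  assumes I: "finite I" and indep: "indep_vars (\<lambda>_. borel) Z I"
    and bnd: "\<And>i \<omega>. i \<in> I \<Longrightarrow> \<bar>Z i \<omega>\<bar> \<le> c"
    and mean: "\<And>i. i \<in> I \<Longrightarrow> expectation (Z i) = 0"
  shows "expectation (\<lambda>\<omega>. (\<Sum>i\<in>I. Z i \<omega>)\<^sup>2) = (\<Sum>i\<in>I. expectation (\<lambda>\<omega>. (Z i \<omega>)\<^sup>2))"
proof -
  have Z: "Z i \<in> borel_measurable M" if "i \<in> I" for i
    using indep that unfolding indep_vars_def by auto
  have int: "integrable M (Z i)" if "i \<in> I" for i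
    using Z bnd that by (intro integrable_bounded[where B = c]) auto
  have int2: "integrable M (\<lambda>\<omega>. Z i \<omega> * Z j \<omega>)" if "i \<in> I" "j \<in> I" for i j
    using Z bnd that
    by (intro integrable_bounded[where B = "c * c"])
      (auto simp: abs_mult intro!: mult_mono order_trans[OF abs_ge_zero])
  have cross: "expectation (\<lambda>\<omega>. Z i \<omega> * Z j \<omega>) = 0" if "i \<in> I" "j \<in> I" "i \<noteq> j" for i j
  proof -
    have "expectation (\<lambda>\<omega>. \<Prod>k\<in>{i, j}. Z k \<omega>) = (\<Prod>k\<in>{i, j}. expectation (Z k))"
      using that int by (intro indep_vars_lebesgue_integral indep_vars_subset[OF indep]) auto
    then show ?thesis
      using that mean by simp
  qed
  have "expectation (\<lambda>\<omega>. (\<Sum>i\<in>I. Z i \<omega>)\<^sup>2) = expectation (\<lambda>\<omega>. \<Sum>i\<in>I. \<Sum>j\<in>I. Z i \<omega> * Z j \<omega>)"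
    by (simp add: power2_eq_square sum_product)
  also have "\<dots> = (\<Sum>i\<in>I. \<Sum>j\<in>I. expectation (\<lambda>\<omega>. Z i \<omega> * Z j \<omega>))"
    using int2 by (simp add: Bochner_Integration.integral_sum)
  also have "\<dots> = (\<Sum>i\<in>I. expectation (\<lambda>\<omega>. Z i \<omega> * Z i \<omega>))"
  proof (intro sum.cong refl)
    fix i assume "i \<in> I"
    then show "(\<Sum>j\<in>I. expectation (\<lambda>\<omega>. Z i \<omega> * Z j \<omega>)) = expectation (\<lambda>\<omega>. Z i \<omega> * Z i \<omega>)"
      using I cross by (subst sum.remove[of I i]) (auto intro!: sum.neutral)
  qed
  finally show ?thesis
    by (simp add: power2_eq_square)
qed

lemma inner_sum_centred:
  fixes Y :: "'i \<Rightarrow> 'a \<Rightarrow> 'b::euclidean_space"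
  assumes "\<And>i. i \<in> I \<Longrightarrow> integrable M (Y i)"
  shows "u \<bullet> (\<Sum>i\<in>I. Y i \<omega> - expectation (Y i))
    = (\<Sum>i\<in>I. u \<bullet> Y i \<omega> - expectation (\<lambda>\<omega>. u \<bullet> Y i \<omega>))"
  using assms by (simp add: inner_sum_right inner_diff_right)

lemma expectation_sum_centred:
  fixes Y :: "'i \<Rightarrow> 'a \<Rightarrow> 'b::euclidean_space"
  assumes "\<And>i. i \<in> I \<Longrightarrow> integrable M (Y i)"
  shows "expectation (\<lambda>\<omega>. \<Sum>i\<in>I. Y i \<omega> - expectation (Y i)) = 0"
  using assms by (simp add: Bochner_Integration.integral_sum prob_space)

lemma norm_sum_centred_le:
  fixes Y :: "'i \<Rightarrow> 'a \<Rightarrow> 'b::euclidean_space" and B :: real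
  assumes "\<And>i. i \<in> I \<Longrightarrow> Y i \<in> borel_measurable M"
    and "\<And>i \<omega>. i \<in> I \<Longrightarrow> norm (Y i \<omega>) \<le> B"
  shows "norm (\<Sum>i\<in>I. Y i \<omega> - expectation (Y i)) \<le> card I * (2 * B)"
proof -
  have "norm (Y i \<omega> - expectation (Y i)) \<le> 2 * B" if "i \<in> I" for i
  proof -
    have "norm (expectation (Y i)) \<le> expectation (\<lambda>\<omega>. norm (Y i \<omega>))"
      by (rule integral_norm_bound)
    also have "\<dots> \<le> expectation (\<lambda>_. B)"
      using assms that order_trans[OF norm_ge_zero assms(2)[OF that]]
      by (intro integral_mono integrable_norm integrable_bounded[where B = B]) auto
    finally have "norm (expectation (Y i)) \<le> B"
      by (simp add: prob_space)
    then show ?thesis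
      using assms(2)[OF that, of \<omega>] norm_triangle_ineq4[of "Y i \<omega>" "expectation (Y i)"] by linarith
  qed
  then have "norm (\<Sum>i\<in>I. Y i \<omega> - expectation (Y i)) \<le> (\<Sum>i\<in>I. 2 * B)"
    by (intro sum_norm_le) auto
  then show ?thesis
    by simp
qed

lemma inner_cov_mat:
  fixes Z :: "'a \<Rightarrow> real ^ 'p"
  assumes Z: "Z \<in> borel_measurable M" and bnd: "\<And>\<omega>. norm (Z \<omega>) \<le> B"
    and mean: "expectation Z = 0"
  shows "w \<bullet> (cov_mat M Z *v w) = expectation (\<lambda>\<omega>. (w \<bullet> Z \<omega>)\<^sup>2)"
proof -
  have int_Z: "integrable M Z"
    using Z bnd by (rule integrable_bounded)
  have "expectation (\<lambda>\<omega>. Z \<omega> $ k) = 0" for k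
    using int_Z mean by (simp add: cart_eq_inner_axis integral_inner_left)
  then have cov: "cov_mat M Z $ k $ l = expectation (\<lambda>\<omega>. Z \<omega> $ k * Z \<omega> $ l)" for k l
    by (simp add: cov_mat_def)
  have [measurable]: "(\<lambda>\<omega>. Z \<omega> $ k) \<in> borel_measurable M" for k
    unfolding cart_eq_inner_axis using Z by measurable
  have "0 \<le> B"
    using bnd[of undefined] norm_ge_zero order_trans by blast
  have int: "integrable M (\<lambda>\<omega>. w $ k * Z \<omega> $ k * (w $ l * Z \<omega> $ l))" for k l
    using bnd \<open>0 \<le> B\<close>
    by (intro integrable_bounded[where B = "\<bar>w $ k\<bar> * B * (\<bar>w $ l\<bar> * B)"])
      (auto simp: abs_mult intro!: mult_mono mult_left_mono order_trans[OF component_le_norm_cart])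
  have "w \<bullet> (cov_mat M Z *v w) = (\<Sum>k\<in>UNIV. \<Sum>l\<in>UNIV. expectation (\<lambda>\<omega>. w $ k * Z \<omega> $ k * (w $ l * Z \<omega> $ l)))"
    by (simp add: inner_vec_def matrix_vector_mult_def cov sum_distrib_left algebra_simps)
  also have "\<dots> = expectation (\<lambda>\<omega>. \<Sum>k\<in>UNIV. \<Sum>l\<in>UNIV. w $ k * Z \<omega> $ k * (w $ l * Z \<omega> $ l))"
    using int by (simp add: Bochner_Integration.integral_sum)
  also have "\<dots> = expectation (\<lambda>\<omega>. (w \<bullet> Z \<omega>)\<^sup>2)"
    by (simp add: inner_vec_def power2_eq_square sum_product)
  finally show ?thesis .
qed

lemma ln_expectation_exp_inner_sum_centred_le:
  fixes Y :: "'i \<Rightarrow> 'a \<Rightarrow> real ^ 'p" and lam b B :: real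
  assumes I: "finite I" and indep: "indep_vars (\<lambda>_. borel) Y I"
    and bnd: "\<And>i \<omega>. i \<in> I \<Longrightarrow> norm (Y i \<omega>) \<le> B"
    and bnd_w: "\<And>i \<omega>. i \<in> I \<Longrightarrow> \<bar>w \<bullet> Y i \<omega>\<bar> \<le> b"
  defines "\<zeta> \<equiv> \<lambda>\<omega>. \<Sum>i\<in>I. Y i \<omega> - expectation (Y i)"
  shows "ln (expectation (\<lambda>\<omega>. exp (lam * (w \<bullet> \<zeta> \<omega>))))
    \<le> lam\<^sup>2 / 2 * (w \<bullet> (cov_mat M \<zeta> *v w)) + card I * \<bar>lam\<bar> ^ 3 * (2 * b) ^ 3"
proof -
  have Y[measurable]: "Y i \<in> borel_measurable M" if "i \<in> I" for i
    using indep that unfolding indep_vars_def by auto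
  have int_Y: "integrable M (Y i)" if "i \<in> I" for i
    using bnd that by (intro integrable_bounded[where B = B] Y)
  define Z where "Z i \<omega> = w \<bullet> Y i \<omega> - expectation (\<lambda>\<omega>. w \<bullet> Y i \<omega>)" for i \<omega>
  have Z_indep: "indep_vars (\<lambda>_. borel) Z I"
    unfolding Z_def by (rule indep_vars_compose2[OF indep]) simp
  have Z_bnd: "\<bar>Z i \<omega>\<bar> \<le> 2 * b" if "i \<in> I" for i \<omega>
  proof -
    have "\<bar>expectation (\<lambda>\<omega>. w \<bullet> Y i \<omega>)\<bar> \<le> b"
      using that bnd_w by (intro abs_expectation_le) auto
    then show ?thesis
      using bnd_w[OF that, of \<omega>] unfolding Z_def by linarith
  qed
  have Z_mean: "expectation (Z i) = 0" if "i \<in> I" for i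
    using int_Y[OF that] unfolding Z_def by (simp add: prob_space)
  have w_\<zeta>: "w \<bullet> \<zeta> \<omega> = (\<Sum>i\<in>I. Z i \<omega>)" for \<omega>
    unfolding \<zeta>_def Z_def using int_Y by (rule inner_sum_centred)
  have "w \<bullet> (cov_mat M \<zeta> *v w) = expectation (\<lambda>\<omega>. (w \<bullet> \<zeta> \<omega>)\<^sup>2)"
  proof (rule inner_cov_mat)
    show "\<zeta> \<in> borel_measurable M"
      unfolding \<zeta>_def by measurable
    show "norm (\<zeta> \<omega>) \<le> card I * (2 * B)" for \<omega>
      unfolding \<zeta>_def using bnd by (intro norm_sum_centred_le Y)
    show "expectation \<zeta> = 0"
      unfolding \<zeta>_def using int_Y by (rule expectation_sum_centred)
  qed
  also have "\<dots> = (\<Sum>i\<in>I. expectation (\<lambda>\<omega>. (Z i \<omega>)\<^sup>2))"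
    unfolding w_\<zeta> using I Z_indep Z_bnd Z_mean by (rule expectation_square_sum_indep)
  finally show ?thesis
    unfolding w_\<zeta> using ln_expectation_exp_sum_indep_le[OF I Z_indep Z_bnd Z_mean] by simp
qed

end

lemma sqrt_cube_div_sqrt:
  fixes h s :: real and n :: nat
  assumes "0 < h"
  shows "sqrt (n * h ^ d * s) ^ 3 / sqrt (n * h ^ (3 * d)) = n * sqrt s ^ 3"
proof (cases "n = 0")
  case False
  define a where "a = sqrt (h ^ d)"
  have "0 < a" "0 < sqrt n"
    using assms False by (simp_all add: a_def)
  have "h ^ (3 * d) = (h ^ d) ^ 3"
    by (simp add: power_mult[symmetric] mult.commute)
  then have "sqrt (n * h ^ d * s) ^ 3 / sqrt (n * h ^ (3 * d)) = (sqrt n * a * sqrt s) ^ 3 / (sqrt n * a ^ 3)"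
    by (simp add: a_def real_sqrt_mult real_sqrt_power)
  also have "\<dots> = (sqrt n)\<^sup>2 * sqrt s ^ 3"
    using \<open>0 < a\<close> \<open>0 < sqrt n\<close> by (simp add: field_simps eval_nat_numeral)
  finally show ?thesis
    by simp
qed simp

lemma cubic_exponent_le:
  fixes lam g b p v :: real and n :: nat
  assumes "\<bar>lam\<bar> \<le> g" "0 \<le> b" "v \<le> p"
  shows "lam\<^sup>2 / 2 * v + n * \<bar>lam\<bar> ^ 3 * (2 * b) ^ 3 \<le> (p + 16 * g * (n * b ^ 3)) * lam\<^sup>2 / 2"
proof -
  have "n * \<bar>lam\<bar> ^ 3 * (2 * b) ^ 3 = (8 * n * b ^ 3 * lam\<^sup>2) * \<bar>lam\<bar>"
    by (simp add: power2_eq_square power3_eq_cube)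
  also have "\<dots> \<le> (8 * n * b ^ 3 * lam\<^sup>2) * g"
    using assms(1,2) by (intro mult_left_mono) simp_all
  finally have "n * \<bar>lam\<bar> ^ 3 * (2 * b) ^ 3 \<le> 16 * g * (n * b ^ 3) * lam\<^sup>2 / 2"
    by simp
  moreover have "lam\<^sup>2 / 2 * v \<le> p * lam\<^sup>2 / 2"
    using mult_right_mono[OF assms(3), of "lam\<^sup>2"] by (simp add: mult.commute)
  ultimately show ?thesis
    by (simp add: algebra_simps)
qed

theorem lemma4:
  fixes M :: "'a measure"
    and X :: "nat \<Rightarrow> 'a \<Rightarrow> real ^ 'd"
    and f :: "real ^ 'd \<Rightarrow> ennreal"
    and K :: "real ^ 'd \<Rightarrow> real"
    and \<Psi> :: "real ^ 'd \<Rightarrow> real ^ 'p"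
    and i0 :: 'p
    and n :: nat and h :: real and x0 :: "real ^ 'd"
    and S :: "real ^ 'p ^ 'p"
    and g lam :: real and \<gamma> :: "real ^ 'p"
  assumes "prob_space M"
    and "n \<ge> 1" and "h > 0"
    and "prob_space.indep_vars M (\<lambda>_. borel) X {..<n}"
    and "\<And>i. i < n \<Longrightarrow> distributed M lborel (X i) f"
    and "K \<in> borel_measurable borel"
    and "\<And>t. K t \<ge> 0"
    and "\<exists>B. \<forall>t. K t \<le> B"
    and "\<And>t. t \<notin> unit_cube \<Longrightarrow> K t = 0"
    and "\<Psi> \<in> borel_measurable (restrict_space borel unit_cube)"
    and "\<exists>B. \<forall>t\<in>unit_cube. norm (\<Psi> t) \<le> B"
    and "\<And>t. t \<in> unit_cube \<Longrightarrow> \<Psi> t $ i0 = 1"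
    and "pos_def_mat (cov_mat M (score_centered M n h x0 K \<Psi> X))"
    and "pos_def_mat S"
    and "S ** S = cov_mat M (score_centered M n h x0 K \<Psi> X)"
    and "g > 0" and "norm \<gamma> = 1" and "\<bar>lam\<bar> \<le> g"
  shows "ln (integral\<^sup>L M (\<lambda>\<omega>. exp (lam * (\<gamma> \<bullet> (matrix_inv S *v score_centered M n h x0 K \<Psi> X \<omega>)))))
    \<le> (real CARD('p) + 16 * g
          * (sqrt (real n * h ^ CARD('d) * (SUP t\<in>unit_cube. (K t)\<^sup>2 * (\<Psi> t \<bullet> ((matrix_inv S ** matrix_inv S) *v \<Psi> t))))) ^ 3
          / sqrt (real n * h ^ (3 * CARD('d)))) * lam\<^sup>2 / 2"
proof -
  interpret prob_space M by fact
  define A where "A = matrix_inv S"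
  define s where "s = (SUP t\<in>unit_cube. (K t)\<^sup>2 * (\<Psi> t \<bullet> ((A ** A) *v \<Psi> t)))"
  define \<phi> where "\<phi> t = K t *\<^sub>R \<Psi> t" for t
  define Y where "Y i \<omega> = \<phi> ((1 / h) *\<^sub>R (X i \<omega> - x0))" for i \<omega>
  have S: "invertible S" "transpose S = S"
    using assms(14) by (auto simp: pos_def_mat_invertible pos_def_mat_def symmetric_mat_def)
  have A: "transpose A = A"
    unfolding A_def using S by (rule transpose_matrix_inv_symmetric)
  have [measurable]: "\<phi> \<in> borel_measurable borel"
    unfolding \<phi>_def using assms(6,10,9) by (rule kernel_feature_measurable)
  have Y_indep: "indep_vars (\<lambda>_. borel) Y {..<n}"
    unfolding Y_def by (intro indep_vars_compose2[OF assms(4)]) measurable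
  obtain B where Y_bnd: "\<And>i \<omega>. norm (Y i \<omega>) \<le> B"
    unfolding Y_def \<phi>_def using kernel_feature_bounded[OF assms(7,8,9,11)] by blast
  have cube: "unit_cube \<noteq> {}"
    by (auto simp: unit_cube_def box_ne_empty)
  have bnd_w: "\<bar>(A *v \<gamma>) \<bullet> Y i \<omega>\<bar> \<le> sqrt s" for i \<omega>
    unfolding Y_def \<phi>_def s_def by (rule abs_inner_kernel_feature_le[OF assms(7,8,9,11) cube A assms(17)])
  have "score_centered M n h x0 K \<Psi> X = (\<lambda>\<omega>. \<Sum>i<n. Y i \<omega> - expectation (Y i))"
    unfolding score_centered_def Y_def \<phi>_def ..
  moreover have "\<gamma> \<bullet> (A *v v) = (A *v \<gamma>) \<bullet> v" for v
    by (rule inner_matrix_vector_symmetric[OF A])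
  moreover have "(A *v \<gamma>) \<bullet> ((S ** S) *v (A *v \<gamma>)) = 1"
    unfolding A_def using inner_matrix_inv_square[OF S] assms(17) by (simp add: dot_square_norm)
  ultimately have "ln (expectation (\<lambda>\<omega>. exp (lam * (\<gamma> \<bullet> (A *v score_centered M n h x0 K \<Psi> X \<omega>)))))
      \<le> lam\<^sup>2 / 2 * 1 + n * \<bar>lam\<bar> ^ 3 * (2 * sqrt s) ^ 3"
    using ln_expectation_exp_inner_sum_centred_le[OF _ Y_indep Y_bnd bnd_w, of lam] assms(15) by simp
  also have "\<dots> \<le> (real CARD('p) + 16 * g * (n * sqrt s ^ 3)) * lam\<^sup>2 / 2"
    using assms(18) order_trans[OF abs_ge_zero bnd_w] by (intro cubic_exponent_le) auto
  also have "\<dots> = (real CARD('p) + 16 * g * sqrt (real n * h ^ CARD('d) * s) ^ 3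
      / sqrt (real n * h ^ (3 * CARD('d)))) * lam\<^sup>2 / 2"
    by (simp only: sqrt_cube_div_sqrt[OF assms(3)] times_divide_eq_right[symmetric])
  finally show ?thesis
    unfolding A_def s_def .
qed

end
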